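(* Let $L$ be an atomic orthomodular lattice and let $V\in\mathcal{B}(L)$ be a $2$-dimensional BSA with $\mathcal{F}_V=\{P,P^{\perp}\}$ which is not spiked and such that each of $P$ and $P^{\perp}$ is the join of three or more pairwise orthogonal atoms of $L$. Let $A,B\in\mathcal{M}_V$. Then $A$ and $B$ have the same leading element if and only if there exist a $2$-dimensional, non-spiked $W\in\mathcal{B}(L)$ with $W\neq V$ and $C,D\in\mathcal{M}_W$ such that $A\subseteq C$ and $B\subseteq D$.
   Context: $L$ is an orthomodular lattice with $0$, $1$ and orthocomplementation $P\mapsto P^{\perp}$, which is atomic (every nonzero element lies above an atom, i.e. a minimal nonzero element). Elements $P,Q$ are orthogonal if $P\le Q^{\perp}$. A Boolean subalgebra (BSA) $V$ of $L$ is generated by a family $\mathcal{F}$ of nonzero pairwise orthogonal elements of $L$ with join $1$ if the elements of $\mathcal{F}$ are the atoms of $V$ and every element of $V$ is a join of elements of $\mathcal{F}$; this family is denoted $\mathcal{F}_V$. $\mathcal{B}(L)$ is the set of BSAs of $L$ generated by some such family, ordered by inclusion; the dimension of $V$ is the cardinality of $\mathcal{F}_V$. An mBSA is an element of $\mathcal{B}(L)$ generated by a family of pairwise orthogonal atoms of $L$ with join $1$. $V\in\mathcal{B}(L)$ is spiked if it is an mBSA or its generating family contains precisely one element that is not an atom of $L$ (all others being atoms); in the latter case this unique non-atom is called the leading element of $V$. For a $2$-dimensional non-spiked $V\in\mathcal{B}(L)$, $\mathcal{S}_V$ denotes the set of spiked elements of $\mathcal{B}(L)$ containing $V$, and $\mathcal{M}_V$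 the set of minimal elements of $\mathcal{S}_V$ with respect to inclusion. *)

theory Defs
  imports "HOL-Library.Complemented_Lattices"
begin

(* L is modelled as a type of class orthomodular_lattice; 0 = bot, 1 = top,
   orthocomplement P^perp = - P. *)

definition orthogonal :: "'a::orthomodular_lattice \<Rightarrow> 'a \<Rightarrow> bool" where
  "orthogonal P Q \<longleftrightarrow> P \<le> - Q"

definition is_atom :: "'a::orthomodular_lattice \<Rightarrow> bool" where
  "is_atom a \<longleftrightarrow> a \<noteq> bot \<and> (\<forall>x. x \<le> a \<longrightarrow> x = bot \<or> x = a)"

definition atomic_oml :: "'a::orthomodular_lattice itself \<Rightarrow> bool" where
  "atomic_oml _ \<longleftrightarrow> (\<forall>x::'a. x \<noteq> bot \<longrightarrow> (\<exists>a. is_atom a \<and> a \<le> x))"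

definition is_join :: "'a::orthomodular_lattice set \<Rightarrow> 'a \<Rightarrow> bool" where
  "is_join S x \<longleftrightarrow> (\<forall>s\<in>S. s \<le> x) \<and> (\<forall>y. (\<forall>s\<in>S. s \<le> y) \<longrightarrow> x \<le> y)"

definition pairwise_orth :: "'a::orthomodular_lattice set \<Rightarrow> bool" where
  "pairwise_orth F \<longleftrightarrow> (\<forall>x\<in>F. \<forall>y\<in>F. x \<noteq> y \<longrightarrow> orthogonal x y)"

definition is_BSA :: "'a::orthomodular_lattice set \<Rightarrow> bool" where
  "is_BSA V \<longleftrightarrow> bot \<in> V \<and> top \<in> V \<and>
     (\<forall>x\<in>V. \<forall>y\<in>V. sup x y \<in> V \<and> inf x y \<in> V) \<and> (\<forall>x\<in>V. - x \<in> V) \<and>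
     (\<forall>x\<in>V. \<forall>y\<in>V. \<forall>z\<in>V. inf x (sup y z) = sup (inf x y) (inf x z))"

definition atoms_of :: "'a::orthomodular_lattice set \<Rightarrow> 'a set" where
  "atoms_of V = {a \<in> V. a \<noteq> bot \<and> (\<forall>x\<in>V. x \<le> a \<longrightarrow> x = bot \<or> x = a)}"

definition generated_by :: "'a::orthomodular_lattice set \<Rightarrow> 'a set \<Rightarrow> bool" where
  "generated_by V F \<longleftrightarrow> is_BSA V \<and> (\<forall>x\<in>F. x \<noteq> bot) \<and> pairwise_orth F \<and> is_join F top \<and>
     F = atoms_of V \<and> (\<forall>v\<in>V. \<exists>S\<subseteq>F. is_join S v)"

definition inB :: "'a::orthomodular_lattice set \<Rightarrow> bool" where
  "inB V \<longleftrightarrow> (\<exists>F. generated_by V F)"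

(* generating family F_V (unique when it exists: the atoms of V) *)
definition FV :: "'a::orthomodular_lattice set \<Rightarrow> 'a set" where
  "FV V = atoms_of V"

definition dim2 :: "'a::orthomodular_lattice set \<Rightarrow> bool" where
  "dim2 V \<longleftrightarrow> finite (FV V) \<and> card (FV V) = 2"

definition is_mBSA :: "'a::orthomodular_lattice set \<Rightarrow> bool" where
  "is_mBSA V \<longleftrightarrow> inB V \<and> (\<forall>x\<in>FV V. is_atom x)"

definition leading :: "'a::orthomodular_lattice set \<Rightarrow> 'a \<Rightarrow> bool" where
  "leading V x \<longleftrightarrow> inB V \<and> x \<in> FV V \<and> \<not> is_atom x \<and> (\<forall>y\<in>FV V. y \<noteq> x \<longrightarrow> is_atom y)"

definition spiked :: "'a::orthomodular_lattice set \<Rightarrow> bool" where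
  "spiked V \<longleftrightarrow> is_mBSA V \<or> (\<exists>x. leading V x)"

definition S_of :: "'a::orthomodular_lattice set \<Rightarrow> 'a set set" where
  "S_of V = {W. inB W \<and> spiked W \<and> V \<subseteq> W}"

definition M_of :: "'a::orthomodular_lattice set \<Rightarrow> 'a set set" where
  "M_of V = {W \<in> S_of V. \<forall>W'\<in>S_of V. W' \<subseteq> W \<longrightarrow> W' = W}"

end

theory Submission
  imports Defs
begin

text \<open>
  Elements of a Boolean subalgebra containing \<open>P\<close> split as \<open>y \<squnion> z\<close> with \<open>y \<le> P\<close>,
  \<open>z \<le> P\<^sup>\<bottom>\<close>, and by orthomodularity such sums form a Boolean subalgebra whenever the two
  parts do. Hence a minimal spiked extension \<open>A\<close> of \<open>V\<close> keeps the atoms below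
  one of \<open>P\<close>, \<open>P\<^sup>\<bottom>\<close> and has the other as its leading element.

  If \<open>A \<subseteq> C\<close>, the leading element of \<open>C\<close> lies below the leading element \<open>l\<close> of
  \<open>A\<close>: it cannot lie under an atom, so it is orthogonal to every atom of \<open>A\<close> below
  \<open>l\<^sup>\<bottom>\<close> and hence to their join \<open>l\<^sup>\<bottom>\<close>. Thus if \<open>A\<close>, \<open>B\<close> have leading
  elements \<open>P\<close> and \<open>P\<^sup>\<bottom>\<close> and refine into \<open>C, D \<in> \<M>\<^sub>W\<close>, the leading elements of
  \<open>C\<close> and \<open>D\<close> (which lie in \<open>\<F>\<^sub>W\<close>) force \<open>W = V\<close>. Conversely, if both have leading
  element \<open>P\<^sup>\<bottom>\<close>, choose an atom \<open>c\<close> among three orthogonal atoms below \<open>P\<^sup>\<bottom>\<close>, so that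
  \<open>P\<^sup>\<bottom> \<sqinter> c\<^sup>\<bottom>\<close> is not an atom; splitting off \<open>c\<close> turns \<open>A\<close> and \<open>B\<close> into
  minimal spiked extensions of the non-spiked \<open>W\<close> generated by \<open>P \<squnion> c\<close>.
\<close>

section \<open>Splitting along an element and its complement\<close>

lemma le_and_le_compl_eq_bot:
  fixes x P :: "'a::orthomodular_lattice"
  assumes "x \<le> P" "x \<le> -P"
  shows "x = bot"
proof -
  have "x \<le> inf P (-P)" using assms by (rule le_infI)
  then show ?thesis by (simp add: bot_unique)
qed

lemma orthomodular_dual:
  fixes u v :: "'a::orthomodular_lattice"
  assumes "u \<le> v"
  shows "inf v (sup u (-v)) = u"
proof -
  have "sup (-v) (inf v (-u)) = -u" using orthomodular[of "-v" "-u"] assms by simp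
  then have "- sup (-v) (inf v (-u)) = u" by simp
  then show ?thesis by (simp add: sup_commute)
qed

lemma sup_eq_inf_sup_compl:
  fixes P y z :: "'a::orthomodular_lattice"
  assumes "y \<le> P" "z \<le> -P"
  shows "inf (sup P z) (sup (-P) y) = sup y z"
proof -
  let ?g = "inf (sup P z) (sup (-P) y)" and ?a = "sup y z"
  have "?a \<le> ?g" using assms by (simp add: le_supI1 le_supI2)
  then have split: "sup ?a (inf (-?a) ?g) = ?g" by (rule orthomodular)
  have "P \<le> -z" using assms(2) by (rule compl_le_swap1)
  then have "inf (-z) (sup P z) = P" using orthomodular_dual[of P "-z"] by simp
  moreover have "inf (-y) (sup (-P) y) = -P"
    using orthomodular_dual[of "-P" "-y"] assms(1) by (simp add: sup_commute)
  moreover have "inf (-?a) ?g = inf (inf (-z) (sup P z)) (inf (-y) (sup (-P) y))"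
    by (simp add: inf_aci)
  ultimately have "inf (-?a) ?g = bot" by simp
  then show ?thesis using split by simp
qed

lemma inf_sup_orth_left:
  fixes P y z :: "'a::orthomodular_lattice"
  assumes "y \<le> P" "z \<le> -P"
  shows "inf (sup y z) P = y"
proof -
  have "inf (sup y z) P = inf (inf (sup P z) (sup (-P) y)) P"
    using sup_eq_inf_sup_compl[OF assms] by simp
  also have "\<dots> = inf P (sup (-P) y)"
    by (metis inf.absorb_iff2 inf_commute inf_left_commute sup.cobounded1)
  also have "\<dots> = y" using orthomodular_dual[OF assms(1)] by (simp add: sup_commute)
  finally show ?thesis .
qed

lemma inf_sup_orth_right:
  fixes P y z :: "'a::orthomodular_lattice"
  assumes "y \<le> P" "z \<le> -P"
  shows "inf (sup y z) (-P) = z"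
  using inf_sup_orth_left[of z "-P" y] assms by (simp add: sup_commute)

text \<open>Dual commutation implies commutation; this is what makes meets of split elements split.\<close>

lemma split_if_dual_split:
  fixes P x :: "'a::orthomodular_lattice"
  assumes "x = inf (sup x P) (sup x (-P))"
  shows "x = sup (inf x P) (inf x (-P))"
proof -
  let ?y = "inf (-x) P" and ?z = "inf (-x) (-P)"
  have "-x = sup ?y ?z" using assms by (metis compl_inf compl_sup inf_commute ortho_involution)
  also have "\<dots> = inf (sup P ?z) (sup (-P) ?y)" using sup_eq_inf_sup_compl[of ?y P ?z] by simp
  finally have "x = sup (inf P (- ?y)) (inf (-P) (- ?z))"
    by (metis compl_inf compl_sup ortho_involution sup_commute)
  moreover have "inf x P = inf P (- ?y)" "inf x (-P) = inf (-P) (- ?z)"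
    using inf_sup_orth_left[of "inf P (- ?y)" P "inf (-P) (- ?z)"]
      inf_sup_orth_right[of "inf P (- ?y)" P "inf (-P) (- ?z)"] calculation by simp_all
  ultimately show ?thesis by simp
qed

lemma inf_sup_orth:
  fixes P y1 y2 z1 z2 :: "'a::orthomodular_lattice"
  assumes "y1 \<le> P" "z1 \<le> -P" "y2 \<le> P" "z2 \<le> -P"
  shows "inf (sup y1 z1) (sup y2 z2) = sup (inf y1 y2) (inf z1 z2)"
proof -
  let ?a = "sup y1 z1" and ?b = "sup y2 z2"
  let ?m = "inf ?a ?b"
  have "sup ?a P = sup P z1" "sup ?a (-P) = sup (-P) y1"
    "sup ?b P = sup P z2" "sup ?b (-P) = sup (-P) y2"
    using assms by (intro antisym; simp add: le_supI1 le_supI2)+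
  then have "?a = inf (sup ?a P) (sup ?a (-P))" "?b = inf (sup ?b P) (sup ?b (-P))"
    using sup_eq_inf_sup_compl[of y1 P z1] sup_eq_inf_sup_compl[of y2 P z2] assms by simp_all
  moreover have "inf (sup ?m P) (sup ?m (-P))
      \<le> inf (inf (sup ?a P) (sup ?a (-P))) (inf (sup ?b P) (sup ?b (-P)))"
    by (meson inf.bounded_iff inf.cobounded1 inf.cobounded2 le_infI1 le_infI2 sup_mono order_refl)
  ultimately have "inf (sup ?m P) (sup ?m (-P)) \<le> ?m" by simp
  then have "?m = inf (sup ?m P) (sup ?m (-P))" by (simp add: antisym)
  then have "?m = sup (inf ?m P) (inf ?m (-P))" by (rule split_if_dual_split)
  moreover have "inf ?m P = inf y1 y2"
    using inf_sup_orth_left[of y1 P z1] inf_sup_orth_left[of y2 P z2] assms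
    by (metis inf.assoc inf.commute inf.left_idem)
  moreover have "inf ?m (-P) = inf z1 z2"
    using inf_sup_orth_right[of y1 P z1] inf_sup_orth_right[of y2 P z2] assms
    by (metis inf.assoc inf.commute inf.left_idem)
  ultimately show ?thesis by simp
qed

lemma compl_sup_orth:
  fixes P y z :: "'a::orthomodular_lattice"
  assumes "y \<le> P" "z \<le> -P"
  shows "- sup y z = sup (inf P (-y)) (inf (-P) (-z))"
proof -
  have "sup (-P) (inf P (-y)) = -y" using orthomodular[of "-P" "-y"] assms(1) by simp
  moreover have "sup P (inf (-P) (-z)) = -z"
    using orthomodular[of P "-z"] assms(2) compl_le_swap1 by auto
  ultimately have "- sup y z = inf (sup (inf P (-y)) (-P)) (sup P (inf (-P) (-z)))"
    by (simp add: sup_commute)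
  also have "\<dots> = sup (inf (inf P (-y)) P) (inf (-P) (inf (-P) (-z)))"
    by (rule inf_sup_orth[of _ P]) simp_all
  also have "\<dots> = sup (inf P (-y)) (inf (-P) (-z))" by (simp add: inf_aci)
  finally show ?thesis .
qed

lemma join_le: "is_join S x \<Longrightarrow> s \<in> S \<Longrightarrow> s \<le> x"
  unfolding is_join_def by blast

lemma join_least: "is_join S x \<Longrightarrow> (\<And>s. s \<in> S \<Longrightarrow> s \<le> y) \<Longrightarrow> x \<le> y"
  unfolding is_join_def by blast

lemma join_unique: "is_join S x \<Longrightarrow> is_join S y \<Longrightarrow> x = y"
  unfolding is_join_def by (meson antisym)

lemma join_empty: "is_join {} (bot::'a::orthomodular_lattice)"
  unfolding is_join_def by simp

lemma join_single: "is_join {a} a"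
  unfolding is_join_def by simp

lemma join_union: "is_join S a \<Longrightarrow> is_join T b \<Longrightarrow> is_join (S \<union> T) (sup a b)"
  unfolding is_join_def by (auto intro: le_supI1 le_supI2)

lemma join_pair: "is_join {a, b} (sup a b)"
  using join_union[OF join_single join_single, of a b] by (simp add: insert_commute)

lemma join_subset_pair:
  fixes a b v :: "'a::orthomodular_lattice"
  assumes "S \<subseteq> {a, b}" "is_join S v"
  shows "v \<in> {bot, a, b, sup a b}"
proof -
  have "S = {} \<or> S = {a} \<or> S = {b} \<or> S = {a, b}" using assms(1) by blast
  then show ?thesis using assms(2) join_unique join_empty join_single join_pair by blast
qed

lemma BSA_closed:
  assumes "is_BSA X"
  shows BSA_bot: "bot \<in> X" and "top \<in> X"
    and BSA_compl: "x \<in> X \<Longrightarrow> -x \<in> X"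
    and BSA_sup: "x \<in> X \<Longrightarrow> y \<in> X \<Longrightarrow> sup x y \<in> X"
    and "x \<in> X \<Longrightarrow> y \<in> X \<Longrightarrow> inf x y \<in> X"
  using assms unfolding is_BSA_def by blast+

lemma inB_generated_by: "inB X \<Longrightarrow> generated_by X (FV X)"
  unfolding inB_def generated_by_def FV_def by blast

lemma generated_by_inB: "generated_by X F \<Longrightarrow> inB X"
  unfolding inB_def by blast

lemma generated_by_FV: "generated_by X F \<Longrightarrow> FV X = F"
  unfolding generated_by_def FV_def by blast

lemma generated_by_BSA: "generated_by X F \<Longrightarrow> is_BSA X"
  unfolding generated_by_def by blast

lemma generator_mem: "generated_by X F \<Longrightarrow> f \<in> F \<Longrightarrow> f \<in> X"
  unfolding generated_by_def atoms_of_def by blast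

lemma generator_nonzero: "generated_by X F \<Longrightarrow> f \<in> F \<Longrightarrow> f \<noteq> bot"
  unfolding generated_by_def by blast

lemma generators_orth: "generated_by X F \<Longrightarrow> f \<in> F \<Longrightarrow> g \<in> F \<Longrightarrow> f \<noteq> g \<Longrightarrow> f \<le> -g"
  unfolding generated_by_def pairwise_orth_def orthogonal_def by blast

lemma generated_by_join: "generated_by X F \<Longrightarrow> v \<in> X \<Longrightarrow> \<exists>S\<subseteq>F. is_join S v"
  unfolding generated_by_def by blast

lemma generator_le_or_le_compl:
  fixes f v :: "'a::orthomodular_lattice"
  assumes g: "generated_by X F" and v: "v \<in> X" and f: "f \<in> F"
  shows "f \<le> v \<or> f \<le> -v"
proof -
  obtain S where S: "S \<subseteq> F" "is_join S v" using generated_by_join[OF g v] by blast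
  show ?thesis
  proof (cases "f \<in> S")
    case True
    then show ?thesis using S join_le by blast
  next
    case False
    then have "\<And>s. s \<in> S \<Longrightarrow> s \<le> -f"
      using generators_orth[OF g f] S(1) compl_le_swap1 by blast
    then have "v \<le> -f" using join_least[OF S(2)] by blast
    then show ?thesis using compl_le_swap1 by blast
  qed
qed

section \<open>Orthogonal sums of relative Boolean algebras\<close>

lemma atoms_of_subset: "a \<in> atoms_of Y \<Longrightarrow> X \<subseteq> Y \<Longrightarrow> a \<in> X \<Longrightarrow> a \<in> atoms_of X"
  unfolding atoms_of_def by blast

lemma atoms_of_below: "atoms_of {y \<in> A. y \<le> P} = {a \<in> atoms_of A. a \<le> P}"
  unfolding atoms_of_def by (auto intro: order_trans)

definition relative_BA :: "'a::orthomodular_lattice set \<Rightarrow> 'a \<Rightarrow> bool" where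
  "relative_BA Y P \<longleftrightarrow> (\<forall>y\<in>Y. y \<le> P) \<and> bot \<in> Y \<and> P \<in> Y \<and>
     (\<forall>a\<in>Y. \<forall>b\<in>Y. sup a b \<in> Y \<and> inf a b \<in> Y) \<and> (\<forall>a\<in>Y. inf P (-a) \<in> Y) \<and>
     (\<forall>a\<in>Y. \<forall>b\<in>Y. \<forall>d\<in>Y. inf a (sup b d) = sup (inf a b) (inf a d))"

definition atomistic :: "'a::orthomodular_lattice set \<Rightarrow> bool" where
  "atomistic Y \<longleftrightarrow> (\<forall>v\<in>Y. \<exists>S\<subseteq>atoms_of Y. is_join S v)"

lemma relative_BA_atoms_orth:
  fixes P a b :: "'a::orthomodular_lattice"
  assumes Y: "relative_BA Y P" and a: "a \<in> atoms_of Y" and b: "b \<in> atoms_of Y" and "a \<noteq> b"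
  shows "a \<le> -b"
proof -
  have aY: "a \<in> Y" "a \<le> P" "a \<noteq> bot" and bY: "b \<in> Y" "b \<le> P"
    using a b Y unfolding atoms_of_def relative_BA_def by auto
  have "inf a b \<in> Y" "inf P (-b) \<in> Y" using aY bY Y unfolding relative_BA_def by blast+
  have "inf a b \<noteq> a"
  proof
    assume "inf a b = a"
    then have "a \<le> b" by (metis inf.cobounded2)
    then show False using b aY \<open>a \<noteq> b\<close> unfolding atoms_of_def by blast
  qed
  then have ab: "inf a b = bot" using a \<open>inf a b \<in> Y\<close> unfolding atoms_of_def by auto
  have "sup b (inf P (-b)) = P" using orthomodular[OF bY(2)] by (simp add: inf_commute)
  then have "a = inf a (sup b (inf P (-b)))" using aY(2) by (simp add: inf.absorb1)
  also have "\<dots> = sup (inf a b) (inf a (inf P (-b)))"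
    using Y aY bY \<open>inf P (-b) \<in> Y\<close> unfolding relative_BA_def by simp
  also have "\<dots> = inf a (inf P (-b))" using ab by simp
  finally have "a \<le> inf P (-b)" by (metis inf.cobounded2)
  then show ?thesis by simp
qed

lemma atomistic_join_atoms:
  assumes "atomistic Y" "u \<in> Y" "\<forall>y\<in>Y. y \<le> u"
  shows "is_join (atoms_of Y) u"
  unfolding is_join_def
proof (intro conjI allI impI ballI)
  fix s assume "s \<in> atoms_of Y"
  then show "s \<le> u" using assms(3) unfolding atoms_of_def by blast
next
  fix w assume "\<forall>s\<in>atoms_of Y. s \<le> w"
  moreover obtain S where "S \<subseteq> atoms_of Y" "is_join S u"
    using assms(1,2) unfolding atomistic_def by blast
  ultimately show "u \<le> w" using join_least by blast
qed

definition orth_sum :: "'a::orthomodular_lattice set \<Rightarrow> 'a set \<Rightarrow> 'a set" where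
  "orth_sum Y Z = {sup y z | y z. y \<in> Y \<and> z \<in> Z}"

lemma orth_sumI: "y \<in> Y \<Longrightarrow> z \<in> Z \<Longrightarrow> sup y z \<in> orth_sum Y Z"
  unfolding orth_sum_def by blast

lemma orth_sumE:
  "w \<in> orth_sum Y Z \<Longrightarrow> (\<And>y z. y \<in> Y \<Longrightarrow> z \<in> Z \<Longrightarrow> w = sup y z \<Longrightarrow> thesis) \<Longrightarrow> thesis"
  unfolding orth_sum_def by blast

context
  fixes P :: "'a::orthomodular_lattice" and Y Z :: "'a set"
  assumes Y: "relative_BA Y P" and Z: "relative_BA Z (-P)"
begin

private lemma below: "y \<in> Y \<Longrightarrow> y \<le> P" "z \<in> Z \<Longrightarrow> z \<le> -P"
  using Y Z unfolding relative_BA_def by blast+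

private lemma closed:
  "a \<in> Y \<Longrightarrow> b \<in> Y \<Longrightarrow> sup a b \<in> Y" "a \<in> Y \<Longrightarrow> b \<in> Y \<Longrightarrow> inf a b \<in> Y"
  "a \<in> Z \<Longrightarrow> b \<in> Z \<Longrightarrow> sup a b \<in> Z" "a \<in> Z \<Longrightarrow> b \<in> Z \<Longrightarrow> inf a b \<in> Z"
  "a \<in> Y \<Longrightarrow> inf P (-a) \<in> Y" "a \<in> Z \<Longrightarrow> inf (-P) (-a) \<in> Z"
  "bot \<in> Y" "P \<in> Y" "bot \<in> Z" "-P \<in> Z"
  using Y Z unfolding relative_BA_def by blast+

lemma BSA_orth_sum: "is_BSA (orth_sum Y Z)"
  unfolding is_BSA_def
proof (intro conjI ballI)
  show "bot \<in> orth_sum Y Z" using orth_sumI[OF closed(7,9)] by simp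
  show "top \<in> orth_sum Y Z" using orth_sumI[OF closed(8,10)] by simp
next
  fix a b assume "a \<in> orth_sum Y Z" "b \<in> orth_sum Y Z"
  obtain y1 z1 where 1: "y1 \<in> Y" "z1 \<in> Z" "a = sup y1 z1" using \<open>a \<in> _\<close> by (rule orth_sumE)
  obtain y2 z2 where 2: "y2 \<in> Y" "z2 \<in> Z" "b = sup y2 z2" using \<open>b \<in> _\<close> by (rule orth_sumE)
  have "sup a b = sup (sup y1 y2) (sup z1 z2)" using 1 2 by (simp add: sup_aci)
  then show "sup a b \<in> orth_sum Y Z"
    using orth_sumI[OF closed(1)[OF 1(1) 2(1)] closed(3)[OF 1(2) 2(2)]] by simp
  have "inf a b = sup (inf y1 y2) (inf z1 z2)" using 1 2 inf_sup_orth[of y1 P z1 y2 z2] below by simp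
  then show "inf a b \<in> orth_sum Y Z"
    using orth_sumI[OF closed(2)[OF 1(1) 2(1)] closed(4)[OF 1(2) 2(2)]] by simp
next
  fix a assume "a \<in> orth_sum Y Z"
  then obtain y z where yz: "y \<in> Y" "z \<in> Z" "a = sup y z" by (rule orth_sumE)
  have "-a = sup (inf P (-y)) (inf (-P) (-z))" using yz compl_sup_orth[of y P z] below by simp
  then show "-a \<in> orth_sum Y Z" using orth_sumI[OF closed(5)[OF yz(1)] closed(6)[OF yz(2)]] by simp
next
  fix a b d assume "a \<in> orth_sum Y Z" "b \<in> orth_sum Y Z" "d \<in> orth_sum Y Z"
  obtain y1 z1 where 1: "y1 \<in> Y" "z1 \<in> Z" "a = sup y1 z1" using \<open>a \<in> _\<close> by (rule orth_sumE)
  obtain y2 z2 where 2: "y2 \<in> Y" "z2 \<in> Z" "b = sup y2 z2" using \<open>b \<in> _\<close> by (rule orth_sumE)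
  obtain y3 z3 where 3: "y3 \<in> Y" "z3 \<in> Z" "d = sup y3 z3" using \<open>d \<in> _\<close> by (rule orth_sumE)
  have "sup b d = sup (sup y2 y3) (sup z2 z3)" using 2 3 by (simp add: sup_aci)
  then have "inf a (sup b d) = sup (inf y1 (sup y2 y3)) (inf z1 (sup z2 z3))"
    using 1 2 3 inf_sup_orth[of y1 P z1 "sup y2 y3" "sup z2 z3"] below closed by simp
  also have "\<dots> = sup (sup (inf y1 y2) (inf y1 y3)) (sup (inf z1 z2) (inf z1 z3))"
    using 1 2 3 Y Z unfolding relative_BA_def by simp
  also have "\<dots> = sup (sup (inf y1 y2) (inf z1 z2)) (sup (inf y1 y3) (inf z1 z3))"
    by (simp add: sup_aci)
  also have "\<dots> = sup (inf a b) (inf a d)"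
    using 1 2 3 inf_sup_orth[of y1 P z1 y2 z2] inf_sup_orth[of y1 P z1 y3 z3] below by simp
  finally show "inf a (sup b d) = sup (inf a b) (inf a d)" .
qed

lemma orth_sum_le_left:
  assumes "w \<in> orth_sum Y Z" "w \<le> P"
  shows "w \<in> Y"
proof -
  obtain y z where yz: "y \<in> Y" "z \<in> Z" "w = sup y z" using assms(1) by (rule orth_sumE)
  then have "z \<le> P" using assms(2) by simp
  then have "z = bot" using below(2)[OF yz(2)] by (rule le_and_le_compl_eq_bot)
  then show ?thesis using yz by simp
qed

lemma orth_sum_le_right:
  assumes "w \<in> orth_sum Y Z" "w \<le> -P"
  shows "w \<in> Z"
proof -
  obtain y z where yz: "y \<in> Y" "z \<in> Z" "w = sup y z" using assms(1) by (rule orth_sumE)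
  then have "y \<le> -P" using assms(2) by simp
  with below(1)[OF yz(1)] have "y = bot" by (rule le_and_le_compl_eq_bot)
  then show ?thesis using yz by simp
qed

lemma subset_orth_sum: "Y \<subseteq> orth_sum Y Z" "Z \<subseteq> orth_sum Y Z"
proof -
  show "Y \<subseteq> orth_sum Y Z" using orth_sumI[OF _ closed(9), of _ Y] by (metis subsetI sup_bot_right)
  show "Z \<subseteq> orth_sum Y Z" using orth_sumI[OF closed(7), of _ Z] by (metis subsetI sup_bot_left)
qed

lemma atoms_of_orth_sum: "atoms_of (orth_sum Y Z) = atoms_of Y \<union> atoms_of Z"
proof
  show "atoms_of Y \<union> atoms_of Z \<subseteq> atoms_of (orth_sum Y Z)"
  proof
    fix a assume a: "a \<in> atoms_of Y \<union> atoms_of Z"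
    have "w = bot \<or> w = a" if w: "w \<in> orth_sum Y Z" "w \<le> a" for w
    proof (cases "a \<in> atoms_of Y")
      case True
      then have "a \<le> P" using below unfolding atoms_of_def by blast
      then have "w \<in> Y" using orth_sum_le_left[OF w(1)] w(2) order_trans by blast
      then show ?thesis using True w(2) unfolding atoms_of_def by blast
    next
      case False
      then have aZ: "a \<in> atoms_of Z" using a by blast
      then have "a \<le> -P" using below unfolding atoms_of_def by blast
      then have "w \<in> Z" using orth_sum_le_right[OF w(1)] w(2) order_trans by blast
      then show ?thesis using aZ w(2) unfolding atoms_of_def by blast
    qed
    moreover have "a \<in> orth_sum Y Z" "a \<noteq> bot"
      using a subset_orth_sum unfolding atoms_of_def by blast+
    ultimately show "a \<in> atoms_of (orth_sum Y Z)" unfolding atoms_of_def by blast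
  qed
next
  show "atoms_of (orth_sum Y Z) \<subseteq> atoms_of Y \<union> atoms_of Z"
  proof
    fix a assume a: "a \<in> atoms_of (orth_sum Y Z)"
    then have "a \<in> orth_sum Y Z" unfolding atoms_of_def by blast
    then obtain y z where yz: "y \<in> Y" "z \<in> Z" "a = sup y z" by (rule orth_sumE)
    have "y \<in> orth_sum Y Z" using yz subset_orth_sum by blast
    then have "y = bot \<or> y = a" using a yz unfolding atoms_of_def by simp
    then have "a \<in> Y \<or> a \<in> Z" using yz by auto
    then show "a \<in> atoms_of Y \<union> atoms_of Z"
      using atoms_of_subset[OF a] subset_orth_sum by blast
  qed
qed

private lemma atoms_below: "a \<in> atoms_of Y \<Longrightarrow> a \<le> P" "a \<in> atoms_of Z \<Longrightarrow> a \<le> -P"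
  using below unfolding atoms_of_def by blast+

lemma pairwise_orth_atoms_orth_sum: "pairwise_orth (atoms_of Y \<union> atoms_of Z)"
  unfolding pairwise_orth_def orthogonal_def
proof (intro ballI impI)
  fix a b assume "a \<in> atoms_of Y \<union> atoms_of Z" "b \<in> atoms_of Y \<union> atoms_of Z" "a \<noteq> b"
  then consider "a \<in> atoms_of Y" "b \<in> atoms_of Z" | "a \<in> atoms_of Z" "b \<in> atoms_of Y"
    | "a \<in> atoms_of Y" "b \<in> atoms_of Y" | "a \<in> atoms_of Z" "b \<in> atoms_of Z"
    by blast
  then show "a \<le> -b"
  proof cases
    case 1
    show ?thesis
      using atoms_below(1)[OF 1(1)] compl_le_swap1[OF atoms_below(2)[OF 1(2)]] by (rule order_trans)
  next
    case 2
    show ?thesis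
      using atoms_below(2)[OF 2(1)] compl_mono[OF atoms_below(1)[OF 2(2)]] by (rule order_trans)
  next
    case 3
    show ?thesis by (rule relative_BA_atoms_orth[OF Y 3 \<open>a \<noteq> b\<close>])
  next
    case 4
    show ?thesis by (rule relative_BA_atoms_orth[OF Z 4 \<open>a \<noteq> b\<close>])
  qed
qed

lemma atomistic_orth_sum:
  assumes "atomistic Y" "atomistic Z"
  shows "atomistic (orth_sum Y Z)"
  unfolding atomistic_def atoms_of_orth_sum
proof
  fix v assume "v \<in> orth_sum Y Z"
  then obtain y z where yz: "y \<in> Y" "z \<in> Z" "v = sup y z" by (rule orth_sumE)
  obtain S where S: "S \<subseteq> atoms_of Y" "is_join S y"
    using assms(1) yz(1) unfolding atomistic_def by auto
  obtain T where T: "T \<subseteq> atoms_of Z" "is_join T z"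
    using assms(2) yz(2) unfolding atomistic_def by auto
  have "is_join (S \<union> T) v" using join_union[OF S(2) T(2)] yz(3) by simp
  moreover have "S \<union> T \<subseteq> atoms_of Y \<union> atoms_of Z" using S(1) T(1) by auto
  ultimately show "\<exists>S\<subseteq>atoms_of Y \<union> atoms_of Z. is_join S v" by blast
qed

lemma generated_by_orth_sum:
  assumes "atomistic Y" "atomistic Z"
  shows "generated_by (orth_sum Y Z) (atoms_of Y \<union> atoms_of Z)"
proof -
  have "\<forall>y\<in>Y. y \<le> P" "\<forall>z\<in>Z. z \<le> -P" using below by blast+
  then have "is_join (atoms_of Y) P" "is_join (atoms_of Z) (-P)"
    using atomistic_join_atoms[OF assms(1) closed(8)] atomistic_join_atoms[OF assms(2) closed(10)]
    by simp_all
  then have "is_join (atoms_of Y \<union> atoms_of Z) top" using join_union by fastforce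
  moreover have "\<forall>x\<in>atoms_of Y \<union> atoms_of Z. x \<noteq> bot" unfolding atoms_of_def by blast
  moreover have "\<forall>v\<in>orth_sum Y Z. \<exists>S\<subseteq>atoms_of Y \<union> atoms_of Z. is_join S v"
    using atomistic_orth_sum[OF assms] unfolding atomistic_def atoms_of_orth_sum .
  ultimately show ?thesis
    unfolding generated_by_def using BSA_orth_sum pairwise_orth_atoms_orth_sum atoms_of_orth_sum
    by simp
qed

end

lemma relative_BA_below:
  fixes P :: "'a::orthomodular_lattice"
  assumes A: "is_BSA A" and P: "P \<in> A"
  shows "relative_BA {y \<in> A. y \<le> P} P"
proof -
  have "sup a b \<in> A" "inf a b \<in> A" "inf P (-a) \<in> A" if "a \<in> A" "b \<in> A" for a b
    using that P BSA_closed[OF A] by simp_all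
  moreover have "inf a (sup b d) = sup (inf a b) (inf a d)" if "a \<in> A" "b \<in> A" "d \<in> A" for a b d
    using that A unfolding is_BSA_def by blast
  ultimately show ?thesis
    unfolding relative_BA_def using P BSA_bot[OF A] by (simp add: le_infI1)
qed

lemma atomistic_below:
  assumes "generated_by A F"
  shows "atomistic {y \<in> A. y \<le> P}"
  unfolding atomistic_def atoms_of_below
proof
  fix v assume v: "v \<in> {y \<in> A. y \<le> P}"
  obtain S where S: "S \<subseteq> F" "is_join S v" using generated_by_join[OF assms] v by blast
  have "F = atoms_of A" using assms unfolding generated_by_def by blast
  then have "S \<subseteq> {a \<in> atoms_of A. a \<le> P}"
    using S v join_le[OF S(2)] by (blast intro: order_trans)
  then show "\<exists>S\<subseteq>{a \<in> atoms_of A. a \<le> P}. is_join S v" using S(2) by blast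
qed

lemma join_minus_bot: "is_join S v \<Longrightarrow> is_join (S - {bot}) v"
  unfolding is_join_def by (metis Diff_iff bot.extremum singletonD)

context
  fixes c x :: "'a::orthomodular_lattice"
  assumes orth: "c \<le> -x"
begin

private lemma four_facts:
  "inf c x = bot" "inf x c = bot" "sup x c = sup c x"
  "inf c (sup c x) = c" "inf (sup c x) c = c" "inf x (sup c x) = x" "inf (sup c x) x = x"
  "sup c (sup c x) = sup c x" "sup (sup c x) c = sup c x"
  "sup x (sup c x) = sup c x" "sup (sup c x) x = sup c x"
  "inf (sup c x) (-c) = x" "inf (sup c x) (-x) = c" "inf (sup c x) (inf (-c) (-x)) = bot"
proof -
  show "inf (sup c x) (inf (-c) (-x)) = bot" using inf_compl_bot[of "sup c x"] by simp
  have "inf c x \<le> x" "inf c x \<le> -x" using orth by (simp_all add: le_infI1)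
  then show "inf c x = bot" by (rule le_and_le_compl_eq_bot)
  then show "inf x c = bot" by (simp add: inf_commute)
  show "sup x c = sup c x" by (rule sup_commute)
  show "inf c (sup c x) = c" "inf (sup c x) c = c" "inf x (sup c x) = x" "inf (sup c x) x = x"
    by (simp_all add: inf.absorb1 inf.absorb2)
  show "sup c (sup c x) = sup c x" "sup (sup c x) c = sup c x"
    "sup x (sup c x) = sup c x" "sup (sup c x) x = sup c x"
    by (simp_all add: sup.absorb1 sup.absorb2 sup_left_commute)
  have "x \<le> -c" using orth by (rule compl_le_swap1)
  then show "inf (sup c x) (-c) = x"
    using orthomodular_dual[of x "-c"] by (simp add: inf_commute sup_commute)
  show "inf (sup c x) (-x) = c"
    using orthomodular_dual[OF orth] by (simp add: inf_commute)
qed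

lemma relative_BA_four: "relative_BA {bot, c, x, sup c x} (sup c x)"
  unfolding relative_BA_def by (simp add: four_facts)

lemma atoms_of_four: "atoms_of {bot, c, x, sup c x} = {c, x} - {bot}"
proof -
  have "c \<noteq> sup c x" if "x \<noteq> bot" using that four_facts(2,6) by metis
  moreover have "x \<noteq> sup c x" if "c \<noteq> bot" using that four_facts(1,4) by metis
  moreover have "w = bot" if "w \<le> c" "w \<le> x" for w
    using that four_facts(1) by (metis inf.absorb_iff2 inf.orderE inf_bot_right inf_left_commute)
  ultimately show ?thesis
    unfolding atoms_of_def by (auto simp: four_facts sup.absorb1 sup.absorb2)
qed

lemma atomistic_four: "atomistic {bot, c, x, sup c x}"
  unfolding atomistic_def atoms_of_four
proof
  fix v assume "v \<in> {bot, c, x, sup c x}"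
  then consider "v = bot" | "v = c" | "v = x" | "v = sup c x" by blast
  then have "\<exists>S\<subseteq>{c, x}. is_join S v"
  proof cases
    case 1
    then show ?thesis using join_empty by blast
  next
    case 2
    then show ?thesis using join_single[of c] by blast
  next
    case 3
    then show ?thesis using join_single[of x] by blast
  next
    case 4
    then show ?thesis using join_pair[of c x] by blast
  qed
  then obtain S where "S \<subseteq> {c, x}" "is_join S v" by blast
  then have "S - {bot} \<subseteq> {c, x} - {bot}" "is_join (S - {bot}) v"
    using join_minus_bot by blast+
  then show "\<exists>S\<subseteq>{c, x} - {bot}. is_join S v" by blast
qed

end

lemma relative_BA_two: "relative_BA {bot, c} c"
  using relative_BA_four[of c bot] by (simp add: insert_commute)

lemma atomistic_two: "atomistic {bot, c}"
  using atomistic_four[of c bot] by (simp add: insert_commute)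

lemma atoms_of_two: "atoms_of {bot, c} = {c} - {bot}"
  using atoms_of_four[of c bot] by (simp add: insert_commute)

lemma generated_by_four:
  fixes Q :: "'a::orthomodular_lattice"
  assumes "Q \<noteq> bot" "-Q \<noteq> bot"
  shows "generated_by {bot, Q, -Q, top} {Q, -Q}"
proof -
  have "generated_by (orth_sum {bot, Q} {bot, -Q}) (atoms_of {bot, Q} \<union> atoms_of {bot, -Q})"
    by (rule generated_by_orth_sum[OF relative_BA_two relative_BA_two atomistic_two atomistic_two])
  moreover have "orth_sum {bot, Q} {bot, -Q} = {sup bot bot, sup bot (-Q), sup Q bot, sup Q (-Q)}"
    unfolding orth_sum_def by blast
  then have "orth_sum {bot, Q} {bot, -Q} = {bot, Q, -Q, top}" by (simp add: insert_commute)
  ultimately show ?thesis using assms by (simp add: atoms_of_two insert_commute)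
qed

lemma generated_by_pair_eq:
  fixes P :: "'a::orthomodular_lattice"
  assumes "generated_by V {P, -P}"
  shows "V = {bot, P, -P, top}"
proof
  show "V \<subseteq> {bot, P, -P, top}"
  proof
    fix v assume "v \<in> V"
    then obtain S where "S \<subseteq> {P, -P}" "is_join S v" using generated_by_join[OF assms] by blast
    then have "v \<in> {bot, P, -P, sup P (-P)}" by (rule join_subset_pair)
    then show "v \<in> {bot, P, -P, top}" by simp
  qed
  show "{bot, P, -P, top} \<subseteq> V"
    using BSA_closed[OF generated_by_BSA[OF assms]] generator_mem[OF assms] by blast
qed

lemma dim2_FV_eq:
  fixes W :: "'a::orthomodular_lattice set"
  assumes "inB W" "dim2 W"
  shows "\<exists>Q. FV W = {Q, -Q}"
proof -
  have g: "generated_by W (FV W)" using inB_generated_by[OF assms(1)] .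
  obtain a b where ab: "FV W = {a, b}" "a \<noteq> b"
    using assms(2) unfolding dim2_def by (meson card_2_iff)
  have "b \<le> -a" using generators_orth[OF g, of b a] ab by auto
  then have "sup b (inf (-b) (-a)) = -a" by (rule orthomodular)
  moreover have "is_join (FV W) top" using g unfolding generated_by_def by blast
  then have "is_join {a, b} top" using ab by simp
  then have "sup a b = top" using join_pair join_unique by blast
  then have "inf (-b) (-a) = bot" by (metis compl_sup compl_top_eq sup_commute)
  ultimately have "-a = b" by simp
  then show ?thesis using ab by blast
qed

lemma spiked_pair_iff:
  fixes P :: "'a::orthomodular_lattice"
  assumes g: "generated_by V {P, -P}"
  shows "spiked V \<longleftrightarrow> is_atom P \<or> is_atom (-P)"
proof -
  have FV: "FV V = {P, -P}" by (rule generated_by_FV[OF g])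
  have V: "inB V" by (rule generated_by_inB[OF g])
  have "P \<noteq> -P"
    using generator_nonzero[OF g] le_and_le_compl_eq_bot[of P P] by force
  show ?thesis
  proof
    assume "spiked V"
    then consider "is_mBSA V" | l where "leading V l" unfolding spiked_def by blast
    then show "is_atom P \<or> is_atom (-P)"
    proof cases
      case 1
      then show ?thesis unfolding is_mBSA_def FV by blast
    next
      case 2
      then have "l = P \<or> l = -P" "\<forall>y\<in>{P, -P}. y \<noteq> l \<longrightarrow> is_atom y"
        unfolding leading_def FV by blast+
      then show ?thesis using \<open>P \<noteq> -P\<close> by fastforce
    qed
  next
    assume atom: "is_atom P \<or> is_atom (-P)"
    consider "is_atom P" "is_atom (-P)" | "\<not> is_atom P" | "\<not> is_atom (-P)" by blast
    then show "spiked V"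
    proof cases
      case 1
      then show ?thesis unfolding spiked_def is_mBSA_def FV using V by blast
    next
      case 2
      then have "leading V P" unfolding leading_def FV using V atom \<open>P \<noteq> -P\<close> by blast
      then show ?thesis unfolding spiked_def by blast
    next
      case 3
      then have "leading V (-P)" unfolding leading_def FV using V atom \<open>P \<noteq> -P\<close> by blast
      then show ?thesis unfolding spiked_def by blast
    qed
  qed
qed

lemma leading_unique: "leading X x \<Longrightarrow> leading X y \<Longrightarrow> x = y"
  unfolding leading_def by blast

lemma leading_if_spiked_nonatom:
  assumes "spiked X" "x \<in> FV X" "\<not> is_atom x"
  shows "leading X x"
proof -
  have "\<not> is_mBSA X" using assms(2,3) unfolding is_mBSA_def by blast
  then obtain l where l: "leading X l" using assms(1) unfolding spiked_def by blast
  then have "l = x" using assms(2,3) unfolding leading_def by metis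
  then show ?thesis using l by simp
qed

lemma leading_atoms_le_compl:
  assumes "leading A l" "f \<in> FV A" "f \<le> -l"
  shows "is_atom f"
proof -
  have "l \<noteq> bot"
    using assms(1) generator_nonzero[OF inB_generated_by] unfolding leading_def by blast
  then have "f \<noteq> l" using assms(3) le_and_le_compl_eq_bot[of l l] by blast
  then show ?thesis using assms(1,2) unfolding leading_def by blast
qed

lemma spiked_atoms_on_one_side:
  fixes P :: "'a::orthomodular_lattice"
  assumes "inB A" "spiked A" "P \<in> A"
  shows "(\<forall>f\<in>FV A. f \<le> P \<longrightarrow> is_atom f) \<or> (\<forall>f\<in>FV A. f \<le> -P \<longrightarrow> is_atom f)"
  using assms(2) unfolding spiked_def
proof
  assume "is_mBSA A"
  then show ?thesis unfolding is_mBSA_def by blast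
next
  assume "\<exists>l. leading A l"
  then obtain l where l: "leading A l" by blast
  then have "l \<le> P \<or> l \<le> -P"
    using generator_le_or_le_compl[OF inB_generated_by[OF assms(1)] assms(3)]
    unfolding leading_def by blast
  then show ?thesis
  proof
    assume "l \<le> P"
    then have "f \<le> -l" if "f \<le> -P" for f using that compl_mono order_trans by blast
    then show ?thesis using leading_atoms_le_compl[OF l] by blast
  next
    assume "l \<le> -P"
    then have "f \<le> -l" if "f \<le> P" for f using that compl_le_swap1 order_trans by blast
    then show ?thesis using leading_atoms_le_compl[OF l] by blast
  qed
qed

section \<open>Grafting\<close>

text \<open>\<open>graft A P c\<close> keeps the part of \<open>A\<close> below \<open>P\<close> and replaces the part below \<open>P\<^sup>\<bottom>\<close>
  by the four-element algebra with atoms \<open>c\<close> and \<open>P\<^sup>\<bottom> \<sqinter> c\<^sup>\<bottom>\<close>; for \<open>c = \<bottom>\<close> this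
  collapses \<open>P\<^sup>\<bottom>\<close> to a single generator.\<close>

definition graft :: "'a::orthomodular_lattice set \<Rightarrow> 'a \<Rightarrow> 'a \<Rightarrow> 'a set" where
  "graft A P c = orth_sum {y \<in> A. y \<le> P} {bot, c, inf (-P) (-c), -P}"

context
  fixes P c :: "'a::orthomodular_lattice"
  assumes c: "c \<le> -P"
begin

private lemma compl_part:
  "sup c (inf (-P) (-c)) = -P" "c \<le> - inf (-P) (-c)"
  using orthomodular[OF c] by (simp_all add: inf_commute)

lemma relative_BA_compl_part: "relative_BA {bot, c, inf (-P) (-c), -P} (-P)"
  using relative_BA_four[OF compl_part(2)] unfolding compl_part(1) .

lemma generated_by_graft:
  assumes g: "generated_by A F" and P: "P \<in> A"
  shows "generated_by (graft A P c) ({f \<in> F. f \<le> P} \<union> ({c, inf (-P) (-c)} - {bot}))"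
proof -
  have "generated_by (graft A P c)
      (atoms_of {y \<in> A. y \<le> P} \<union> atoms_of {bot, c, inf (-P) (-c), -P})"
    unfolding graft_def
    using generated_by_orth_sum[OF relative_BA_below[OF generated_by_BSA[OF g] P]
        relative_BA_compl_part atomistic_below[OF g]
        atomistic_four[OF compl_part(2), unfolded compl_part(1)]] .
  moreover have "atoms_of {y \<in> A. y \<le> P} = {f \<in> F. f \<le> P}"
    using g unfolding atoms_of_below generated_by_def by blast
  moreover have "atoms_of {bot, c, inf (-P) (-c), -P} = {c, inf (-P) (-c)} - {bot}"
    using atoms_of_four[OF compl_part(2)] unfolding compl_part(1) .
  ultimately show ?thesis by simp
qed

lemma graft_le_mem:
  assumes "is_BSA A" "P \<in> A" "w \<in> graft A P c" "w \<le> P"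
  shows "w \<in> A"
  using orth_sum_le_left[OF relative_BA_below[OF assms(1,2)] relative_BA_compl_part] assms(3,4)
  unfolding graft_def by blast

end

lemma graftI: "y \<in> A \<Longrightarrow> y \<le> P \<Longrightarrow> z \<in> {bot, c, inf (-P) (-c), -P} \<Longrightarrow> sup y z \<in> graft A P c"
  unfolding graft_def by (blast intro: orth_sumI)

lemma graftE:
  assumes "w \<in> graft A P c"
  obtains y z where "y \<in> A" "y \<le> P" "z \<in> {bot, c, inf (-P) (-c), -P}" "w = sup y z"
  using assms unfolding graft_def by (blast elim: orth_sumE)

lemma graft_subset:
  assumes "is_BSA X" "A \<subseteq> X" "P \<in> X" "c \<in> X"
  shows "graft A P c \<subseteq> X"
proof
  fix w assume "w \<in> graft A P c"
  then obtain y z where "y \<in> A" "z \<in> {bot, c, inf (-P) (-c), -P}" "w = sup y z" by (rule graftE)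
  then show "w \<in> X" using assms BSA_closed[OF assms(1)] by auto
qed

lemma graft_bot_subset: "graft A P bot \<subseteq> graft A P c"
  unfolding graft_def orth_sum_def by auto

lemma four_subset_graft:
  assumes "is_BSA A" "P \<in> A"
  shows "{bot, P, -P, top} \<subseteq> graft A P c"
  using graftI[of bot A P bot c] graftI[of P A P bot c] graftI[of bot A P "-P" c]
    graftI[of P A P "-P" c] assms BSA_bot[OF assms(1)] by simp

lemma leading_graft_bot:
  fixes P :: "'a::orthomodular_lattice"
  assumes g: "generated_by A F" and "P \<in> A" and atoms: "\<forall>f\<in>F. f \<le> P \<longrightarrow> is_atom f"
    and "\<not> is_atom (-P)" "-P \<noteq> bot"
  shows "leading (graft A P bot) (-P)"
proof -
  have gen: "generated_by (graft A P bot) ({f \<in> F. f \<le> P} \<union> {-P})"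
    using generated_by_graft[of bot P, OF _ g \<open>P \<in> A\<close>] \<open>-P \<noteq> bot\<close> by simp
  show ?thesis
    unfolding leading_def generated_by_FV[OF gen] using generated_by_inB[OF gen] atoms assms(4)
    by blast
qed

section \<open>Minimal spiked extensions\<close>

lemma M_ofD:
  assumes "A \<in> M_of V"
  shows "inB A" "spiked A" "V \<subseteq> A"
  using assms unfolding M_of_def S_of_def by auto

lemma M_of_minimal:
  assumes "A \<in> M_of V" "inB X" "spiked X" "V \<subseteq> X" "X \<subseteq> A"
  shows "X = A"
  using assms unfolding M_of_def S_of_def by blast

lemma M_of_eq_graft:
  fixes p :: "'a::orthomodular_lattice"
  assumes A: "A \<in> M_of V" and p: "p \<in> A" and V: "V \<subseteq> {bot, p, -p, top}"
    and atoms: "\<forall>f\<in>FV A. f \<le> p \<longrightarrow> is_atom f" and "\<not> is_atom (-p)" "-p \<noteq> bot"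
  shows "graft A p bot = A" "leading A (-p)"
proof -
  have g: "generated_by A (FV A)" using inB_generated_by[OF M_ofD(1)[OF A]] .
  have B: "is_BSA A" using generated_by_BSA[OF g] .
  have lead: "leading (graft A p bot) (-p)" using leading_graft_bot[OF g p atoms assms(5,6)] .
  then have "inB (graft A p bot)" "spiked (graft A p bot)"
    unfolding leading_def spiked_def by blast+
  moreover have "V \<subseteq> graft A p bot" using V four_subset_graft[OF B p] by blast
  moreover have "graft A p bot \<subseteq> A" using graft_subset[OF B _ p BSA_bot[OF B]] by blast
  ultimately show eq: "graft A p bot = A" by (rule M_of_minimal[OF A])
  show "leading A (-p)" using lead unfolding eq .
qed

lemma M_of_pair:
  fixes P :: "'a::orthomodular_lattice"
  assumes gV: "generated_by V {P, -P}" and na: "\<not> is_atom P" "\<not> is_atom (-P)"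
    and A: "A \<in> M_of V"
  obtains l where "l = P \<or> l = -P" "leading A l"
proof -
  have V: "V = {bot, P, -P, top}" by (rule generated_by_pair_eq[OF gV])
  have nz: "P \<noteq> bot" "-P \<noteq> bot" using generator_nonzero[OF gV] by auto
  have PA: "P \<in> A" "-P \<in> A" using V M_ofD(3)[OF A] by auto
  consider "\<forall>f\<in>FV A. f \<le> P \<longrightarrow> is_atom f" | "\<forall>f\<in>FV A. f \<le> -P \<longrightarrow> is_atom f"
    using spiked_atoms_on_one_side[OF M_ofD(1,2)[OF A] PA(1)] by blast
  then show ?thesis
  proof cases
    case 1
    then show ?thesis using M_of_eq_graft(2)[OF A PA(1) _ 1 na(2) nz(2)] V that[of "-P"] by simp
  next
    case 2
    have "V \<subseteq> {bot, -P, - (-P), top}" using V by auto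
    then show ?thesis using M_of_eq_graft(2)[OF A PA(2) _ 2] na(1) nz(1) that[of P] by simp
  qed
qed

section \<open>Refinements of minimal spiked extensions\<close>

lemma leading_le_compl:
  fixes P :: "'a::orthomodular_lattice"
  assumes lC: "leading C x" and AC: "A \<subseteq> C" and gA: "generated_by A F" and PA: "P \<in> A"
    and atoms: "\<forall>f\<in>F. f \<le> P \<longrightarrow> is_atom f"
  shows "x \<le> -P"
proof -
  have gC: "generated_by C (FV C)" using lC inB_generated_by unfolding leading_def by blast
  have x: "x \<in> FV C" "\<not> is_atom x" using lC unfolding leading_def by auto
  have "x \<noteq> bot" using generator_nonzero[OF gC x(1)] .
  obtain S where S: "S \<subseteq> F" "is_join S P" using generated_by_join[OF gA PA] by blast
  have "s \<le> -x" if s: "s \<in> S" for s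
  proof -
    have "s \<in> C" using generator_mem[OF gA] S(1) s AC by blast
    then have "x \<le> s \<or> x \<le> -s" using generator_le_or_le_compl[OF gC _ x(1)] by blast
    moreover have "is_atom s" using atoms S s join_le[OF S(2) s] by blast
    then have "\<not> x \<le> s" using x(2) \<open>x \<noteq> bot\<close> unfolding is_atom_def by metis
    ultimately show "s \<le> -x" using compl_le_swap1 by blast
  qed
  then have "P \<le> -x" using join_least[OF S(2)] by blast
  then show ?thesis by (rule compl_le_swap1)
qed

lemma leading_le_of_subset:
  assumes lA: "leading A l" and "A \<subseteq> C" and lC: "leading C x"
  shows "x \<le> l"
proof -
  have gA: "generated_by A (FV A)" using lA inB_generated_by unfolding leading_def by blast
  have "l \<in> A" using generator_mem[OF gA] lA unfolding leading_def by blast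
  then have "-l \<in> A" using BSA_compl[OF generated_by_BSA[OF gA]] by blast
  then have "x \<le> - (-l)"
    using leading_le_compl[OF lC \<open>A \<subseteq> C\<close> gA] leading_atoms_le_compl[OF lA] by blast
  then show ?thesis by simp
qed

lemma same_leading_if_common_refinement:
  fixes P :: "'a::orthomodular_lattice"
  assumes gV: "generated_by V {P, -P}" and naV: "\<not> is_atom P" "\<not> is_atom (-P)"
    and A: "A \<in> M_of V" and B: "B \<in> M_of V"
    and W: "inB W" "dim2 W" "\<not> spiked W" "W \<noteq> V"
    and C: "C \<in> M_of W" and D: "D \<in> M_of W" and "A \<subseteq> C" "B \<subseteq> D"
  shows "\<exists>x. leading A x \<and> leading B x"
proof (rule ccontr)
  assume different: "\<nexists>x. leading A x \<and> leading B x"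
  obtain Q where "FV W = {Q, -Q}" using dim2_FV_eq[OF W(1,2)] by blast
  then have gW: "generated_by W {Q, -Q}" using inB_generated_by[OF W(1)] by simp
  have naW: "\<not> is_atom Q" "\<not> is_atom (-Q)" using spiked_pair_iff[OF gW] W(3) by blast+
  obtain la where la: "la = P \<or> la = -P" "leading A la" using M_of_pair[OF gV naV A] by blast
  obtain lb where lb: "lb = P \<or> lb = -P" "leading B lb" using M_of_pair[OF gV naV B] by blast
  obtain xc where xc: "xc = Q \<or> xc = -Q" "leading C xc" using M_of_pair[OF gW naW C] by blast
  obtain xd where xd: "xd = Q \<or> xd = -Q" "leading D xd" using M_of_pair[OF gW naW D] by blast
  have "lb = -la" using la lb different by auto
  have "xc \<le> la" "xd \<le> -la"
    using leading_le_of_subset[OF la(2) \<open>A \<subseteq> C\<close> xc(2)]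
      leading_le_of_subset[OF lb(2) \<open>B \<subseteq> D\<close> xd(2)] \<open>lb = -la\<close> by simp_all
  have "xc \<noteq> bot" using generator_nonzero[OF gW] xc(1) by blast
  then have "xd \<noteq> xc" using \<open>xc \<le> la\<close> \<open>xd \<le> -la\<close> le_and_le_compl_eq_bot by blast
  then have "xd = -xc" using xc(1) xd(1) by auto
  then have "xc = la" using \<open>xc \<le> la\<close> \<open>xd \<le> -la\<close> by (simp add: antisym)
  then have "W = V"
    using generated_by_pair_eq[OF gW] generated_by_pair_eq[OF gV] xc(1) la(1) by auto
  then show False using W(4) by simp
qed

context
  fixes V A :: "'a::orthomodular_lattice set" and P c :: 'a
  assumes gV: "generated_by V {P, -P}" and A: "A \<in> M_of V" and lA: "leading A (-P)"
    and c: "is_atom c" "c \<le> -P" and rest: "\<not> is_atom (inf (-P) (-c))"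
begin

private lemma nonzero: "P \<noteq> bot" "-P \<noteq> bot" "c \<noteq> bot" "inf (-P) (-c) \<noteq> bot"
proof -
  show "P \<noteq> bot" "-P \<noteq> bot" using generator_nonzero[OF gV] by auto
  show "c \<noteq> bot" using c(1) unfolding is_atom_def by blast
  have "sup c (inf (-P) (-c)) = -P" using orthomodular[OF c(2)] by (simp add: inf_commute)
  moreover have "\<not> is_atom (-P)" using lA unfolding leading_def by blast
  ultimately show "inf (-P) (-c) \<noteq> bot" using c(1) by (metis sup_bot_right)
qed

private lemma V_eq: "V = {bot, P, -P, top}"
  by (rule generated_by_pair_eq[OF gV])

private lemma A_facts: "generated_by A (FV A)" "is_BSA A" "P \<in> A"
proof -
  show g: "generated_by A (FV A)" using inB_generated_by[OF M_ofD(1)[OF A]] .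
  show "is_BSA A" using generated_by_BSA[OF g] .
  show "P \<in> A" using V_eq M_ofD(3)[OF A] by blast
qed

private lemma rest_le: "inf (-P) (-c) \<le> -P" "inf (-P) (-c) \<le> -c"
  by simp_all

private lemma rest_ne_le: "\<not> P \<le> inf (-P) (-c)" "\<not> -P \<le> inf (-P) (-c)"
proof
  assume "P \<le> inf (-P) (-c)"
  then have "P \<le> -P" using rest_le(1) by (rule order_trans)
  then show False using nonzero(1) le_and_le_compl_eq_bot[of P P] by blast
next
  show "\<not> -P \<le> inf (-P) (-c)"
  proof
    assume "-P \<le> inf (-P) (-c)"
    then have "c \<le> -c" using c(2) rest_le(2) order_trans by blast
    then show False using nonzero(3) le_and_le_compl_eq_bot[of c c] by blast
  qed
qed

lemma refinement_props:
  defines "W \<equiv> {bot, sup P c, inf (-P) (-c), top}"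
  shows "inB W" "dim2 W" "\<not> spiked W" "W \<noteq> V"
proof -
  have gW: "generated_by W {sup P c, - sup P c}"
    using generated_by_four[of "sup P c"] nonzero(1,4) unfolding W_def by simp
  then show "inB W" by (rule generated_by_inB)
  have "sup P c \<noteq> inf (-P) (-c)" using rest_ne_le(1) by (metis sup.cobounded1)
  then show "dim2 W" unfolding dim2_def generated_by_FV[OF gW] by simp
  have "\<not> c \<le> P" using c(2) nonzero(3) le_and_le_compl_eq_bot by blast
  then have "P \<noteq> sup P c" by (metis sup.cobounded2)
  then have "\<not> is_atom (sup P c)" using nonzero(1) sup.cobounded1 unfolding is_atom_def by blast
  then show "\<not> spiked W" using spiked_pair_iff[OF gW] rest by simp
  have "inf (-P) (-c) \<noteq> P" "inf (-P) (-c) \<noteq> -P" "inf (-P) (-c) \<noteq> top"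
    using rest_ne_le by (metis order_refl top_greatest)+
  then have "inf (-P) (-c) \<notin> V" using nonzero(4) V_eq by simp
  then show "W \<noteq> V" unfolding W_def by blast
qed

private lemma rest_not_le: "\<not> inf (-P) (-c) \<le> sup P c"
proof
  assume "inf (-P) (-c) \<le> sup P c"
  then have "inf (-P) (-c) \<le> - inf (-P) (-c)" by simp
  then show False using nonzero(4) le_and_le_compl_eq_bot by blast
qed

lemma leading_graft: "leading (graft A P c) (inf (-P) (-c))"
proof -
  have gC: "generated_by (graft A P c) ({f \<in> FV A. f \<le> P} \<union> {c, inf (-P) (-c)})"
    using generated_by_graft[OF c(2) A_facts(1,3)] nonzero(3,4) by simp
  have "is_atom f" if "f \<in> FV A" "f \<le> P" for f
    using leading_atoms_le_compl[OF lA] that by simp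
  then show ?thesis
    unfolding leading_def generated_by_FV[OF gC] using generated_by_inB[OF gC] c(1) rest by blast
qed

lemma graft_in_S_of: "graft A P c \<in> S_of {bot, sup P c, inf (-P) (-c), top}"
proof -
  have "{bot, P, -P, top} \<subseteq> graft A P c" using four_subset_graft[OF A_facts(2,3)] .
  moreover have "sup P c \<in> graft A P c" "sup bot (inf (-P) (-c)) \<in> graft A P c"
    using graftI[of P A P c c] graftI[of bot A P "inf (-P) (-c)" c] A_facts(3)
      BSA_bot[OF A_facts(2)] by simp_all
  moreover have "inB (graft A P c)" "spiked (graft A P c)"
    using leading_graft unfolding leading_def spiked_def by blast+
  ultimately show ?thesis unfolding S_of_def by simp
qed

private lemma atom_mem_if_refines:
  assumes C': "C' \<in> S_of {bot, sup P c, inf (-P) (-c), top}" "C' \<subseteq> graft A P c"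
    and lead: "leading C' (inf (-P) (-c))"
  shows "c \<in> C'"
proof -
  have gC': "generated_by C' (FV C')" using C'(1) inB_generated_by unfolding S_of_def by blast
  have "sup P c \<in> C'" using C'(1) unfolding S_of_def by blast
  then obtain S where S: "S \<subseteq> FV C'" "is_join S (sup P c)" using generated_by_join[OF gC'] by blast
  have "t \<le> P" if t: "t \<in> S" "t \<noteq> c" for t
  proof -
    have "t \<le> sup P c" using join_le[OF S(2) t(1)] .
    then have "t \<noteq> inf (-P) (-c)" using rest_not_le by blast
    then have atom: "is_atom t" using lead S(1) t(1) unfolding leading_def by blast
    have "t \<in> graft A P c" using generator_mem[OF gC'] S(1) t(1) C'(2) by blast
    then obtain y z where yz: "y \<in> A" "y \<le> P" "z \<in> {bot, c, inf (-P) (-c), -P}" "t = sup y z"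
      by (rule graftE)
    have "z \<le> sup P c" using yz(4) \<open>t \<le> sup P c\<close> by simp
    then have "z \<noteq> inf (-P) (-c)" "z \<noteq> -P"
      using rest_not_le rest_le(1) order_trans by blast+
    moreover have "z \<noteq> c"
      using atom nonzero(3) yz(4) t(2) unfolding is_atom_def by (metis sup.cobounded2)
    ultimately show "t \<le> P" using yz by auto
  qed
  have "c \<in> S"
  proof (rule ccontr)
    assume "c \<notin> S"
    then have "sup P c \<le> P" using join_least[OF S(2)] \<open>\<And>t. t \<in> S \<Longrightarrow> t \<noteq> c \<Longrightarrow> t \<le> P\<close> by blast
    then have "c \<le> P" by simp
    then show False using c(2) nonzero(3) le_and_le_compl_eq_bot by blast
  qed
  then show "c \<in> C'" using generator_mem[OF gC'] S(1) by blast
qed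

lemma subset_graft: "A \<subseteq> graft A P c"
proof -
  have "\<forall>f\<in>FV A. f \<le> P \<longrightarrow> is_atom f" using leading_atoms_le_compl[OF lA] by simp
  then have "graft A P bot = A"
    using M_of_eq_graft(1)[OF A A_facts(3)] nonzero(2) V_eq lA unfolding leading_def by blast
  then show ?thesis using graft_bot_subset by blast
qed

private lemma refinement_generators:
  assumes C': "C' \<in> S_of {bot, sup P c, inf (-P) (-c), top}" "C' \<subseteq> graft A P c"
  shows "c \<in> C'" "P \<in> C'" "\<forall>f\<in>FV C'. f \<le> P \<longrightarrow> is_atom f"
proof -
  have iC': "inB C'" "spiked C'" "{bot, sup P c, inf (-P) (-c), top} \<subseteq> C'"
    using C'(1) unfolding S_of_def by auto
  have "inf (-P) (-c) \<in> atoms_of (graft A P c)"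
    using leading_graft unfolding leading_def FV_def by blast
  then have "inf (-P) (-c) \<in> FV C'"
    unfolding FV_def using atoms_of_subset C'(2) iC'(3) by blast
  then have lead: "leading C' (inf (-P) (-c))" using leading_if_spiked_nonatom iC'(2) rest by blast
  show cC': "c \<in> C'" using atom_mem_if_refines[OF C' lead] .
  have "inf (sup P c) (-c) = P"
    using orthomodular_dual[of P "-c"] compl_le_swap1[OF c(2)] by (simp add: inf_commute)
  then show "P \<in> C'"
    using BSA_closed[OF generated_by_BSA[OF inB_generated_by[OF iC'(1)]]] iC'(3) cC'
    by (metis insert_subset)
  show "\<forall>f\<in>FV C'. f \<le> P \<longrightarrow> is_atom f"
    using leading_atoms_le_compl[OF lead] by (simp add: le_supI1)
qed

lemma graft_in_M_of: "graft A P c \<in> M_of {bot, sup P c, inf (-P) (-c), top}"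
  unfolding M_of_def
proof (intro CollectI conjI ballI impI)
  show "graft A P c \<in> S_of {bot, sup P c, inf (-P) (-c), top}" by (rule graft_in_S_of)
  fix C' assume C': "C' \<in> S_of {bot, sup P c, inf (-P) (-c), top}" "C' \<subseteq> graft A P c"
  have gC': "generated_by C' (FV C')" using C'(1) inB_generated_by unfolding S_of_def by blast
  have BC': "is_BSA C'" using generated_by_BSA[OF gC'] .
  note gens = refinement_generators[OF C']
  have "leading (graft C' P bot) (-P)"
    using leading_graft_bot[OF gC' gens(2,3)] nonzero(2) lA unfolding leading_def by blast
  then have "inB (graft C' P bot)" "spiked (graft C' P bot)"
    unfolding leading_def spiked_def by blast+
  moreover have "V \<subseteq> graft C' P bot" using four_subset_graft[OF BC' gens(2)] V_eq by simp
  moreover have "graft C' P bot \<subseteq> A"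
  proof
    fix w assume "w \<in> graft C' P bot"
    then obtain y z where yz: "y \<in> C'" "y \<le> P" "z \<in> {bot, bot, inf (-P) (-bot), -P}"
      "w = sup y z" by (rule graftE)
    have "y \<in> A" using graft_le_mem[OF c(2) A_facts(2,3)] yz(1,2) C'(2) by blast
    moreover have "z \<in> A" using yz(3) V_eq M_ofD(3)[OF A] by auto
    ultimately show "w \<in> A" using yz(4) BSA_sup[OF A_facts(2)] by blast
  qed
  ultimately have "graft C' P bot = A" by (rule M_of_minimal[OF A])
  then have "A \<subseteq> C'" using graft_subset[OF BC' _ gens(2) BSA_bot[OF BC']] by blast
  then show "C' = graft A P c" using graft_subset[OF BC' _ gens(2,1)] C'(2) by blast
qed

end

lemma atom_with_nonatomic_complement:
  fixes Q :: "'a::orthomodular_lattice"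
  assumes "\<forall>a\<in>S. is_atom a" "pairwise_orth S" "infinite S \<or> 3 \<le> card S" "is_join S Q"
  shows "\<exists>c. is_atom c \<and> c \<le> Q \<and> \<not> is_atom (inf Q (-c))"
proof -
  obtain T where T: "T \<subseteq> S" "card T = 3"
    using assms(3) obtain_subset_with_card_n infinite_arbitrarily_large by metis
  then obtain c s1 s2 where cs: "T = {c, s1, s2}" "c \<noteq> s1" "s1 \<noteq> s2" "c \<noteq> s2"
    by (metis card_3_iff)
  then have "c \<in> S" "s1 \<in> S" "s2 \<in> S" using T(1) by auto
  then have "s1 \<le> inf Q (-c)" "s2 \<le> inf Q (-c)"
    using assms(2,4) cs join_le unfolding pairwise_orth_def orthogonal_def by (metis le_inf_iff)+
  moreover have "s1 \<noteq> bot" "s2 \<noteq> bot" "is_atom c"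
    using assms(1) \<open>c \<in> S\<close> \<open>s1 \<in> S\<close> \<open>s2 \<in> S\<close> unfolding is_atom_def by blast+
  ultimately show ?thesis
    using cs(3) join_le[OF assms(4) \<open>c \<in> S\<close>] unfolding is_atom_def by metis
qed

lemma common_refinement_if_same_leading:
  fixes P :: "'a::orthomodular_lattice"
  assumes gV: "generated_by V {P, -P}"
    and "\<exists>S. (\<forall>a\<in>S. is_atom a) \<and> pairwise_orth S \<and> (infinite S \<or> 3 \<le> card S) \<and> is_join S (-P)"
    and A: "A \<in> M_of V" "leading A (-P)" and B: "B \<in> M_of V" "leading B (-P)"
  shows "\<exists>W C D. inB W \<and> dim2 W \<and> \<not> spiked W \<and> W \<noteq> V \<and>
    C \<in> M_of W \<and> D \<in> M_of W \<and> A \<subseteq> C \<and> B \<subseteq> D"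
proof -
  obtain c where c: "is_atom c" "c \<le> -P" "\<not> is_atom (inf (-P) (-c))"
    using assms(2) atom_with_nonatomic_complement by blast
  then show ?thesis
    using refinement_props[OF gV A c] graft_in_M_of[OF gV A c] graft_in_M_of[OF gV B c]
      subset_graft[OF gV A c] subset_graft[OF gV B c] by blast
qed

theorem lemma5p1:
  fixes V A B :: "'a::orthomodular_lattice set" and P :: 'a
  assumes "atomic_oml TYPE('a)"
    and "inB V" and "dim2 V" and "FV V = {P, - P}" and "\<not> spiked V"
    and "\<exists>S. (\<forall>a\<in>S. is_atom a) \<and> pairwise_orth S \<and> (infinite S \<or> 3 \<le> card S) \<and> is_join S P"
    and "\<exists>S. (\<forall>a\<in>S. is_atom a) \<and> pairwise_orth S \<and> (infinite S \<or> 3 \<le> card S) \<and> is_join S (- P)"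
    and "A \<in> M_of V" and "B \<in> M_of V"
  shows "(\<exists>x. leading A x \<and> leading B x) \<longleftrightarrow>
    (\<exists>W C D. inB W \<and> dim2 W \<and> \<not> spiked W \<and> W \<noteq> V \<and>
       C \<in> M_of W \<and> D \<in> M_of W \<and> A \<subseteq> C \<and> B \<subseteq> D)"
proof -
  have gV: "generated_by V {P, -P}" using inB_generated_by[OF assms(2)] assms(4) by simp
  have na: "\<not> is_atom P" "\<not> is_atom (-P)" using spiked_pair_iff[OF gV] assms(5) by blast+
  show ?thesis
  proof
    assume "\<exists>x. leading A x \<and> leading B x"
    then obtain x where x: "leading A x" "leading B x" by blast
    obtain l where "l = P \<or> l = -P" "leading A l" using M_of_pair[OF gV na assms(8)] by blast
    then consider "leading A (-P)" "leading B (-P)" | "leading A (- (-P))" "leading B (- (-P))"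
      using x leading_unique by fastforce
    then show "\<exists>W C D. inB W \<and> dim2 W \<and> \<not> spiked W \<and> W \<noteq> V \<and>
       C \<in> M_of W \<and> D \<in> M_of W \<and> A \<subseteq> C \<and> B \<subseteq> D"
    proof cases
      case 1
      show ?thesis
        by (rule common_refinement_if_same_leading[OF gV assms(7,8) 1(1) assms(9) 1(2)])
    next
      case 2
      have "generated_by V {-P, - (-P)}" using gV by (simp add: insert_commute)
      moreover have "\<exists>S. (\<forall>a\<in>S. is_atom a) \<and> pairwise_orth S \<and> (infinite S \<or> 3 \<le> card S) \<and>
          is_join S (- (-P))"
        using assms(6) by simp
      ultimately show ?thesis
        by (rule common_refinement_if_same_leading[OF _ _ assms(8) 2(1) assms(9) 2(2)])
    qed
  next
    assume "\<exists>W C D. inB W \<and> dim2 W \<and> \<not> spiked W \<and> W \<noteq> V \<and>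
      C \<in> M_of W \<and> D \<in> M_of W \<and> A \<subseteq> C \<and> B \<subseteq> D"
    then show "\<exists>x. leading A x \<and> leading B x"
      using same_leading_if_common_refinement[OF gV na assms(8,9)] by blast
  qed
qed

end
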